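(* Assume that $(X_1,Y_1),\dots,(X_{n+1},Y_{n+1})$ are exchangeable, that the predictor $\hat f_D$ is invariant to permutations of the data in $D$, and that the non-conformity scores $S_{D^{Y_{n+1}}}(X_1,Y_1),\dots,S_{D^{Y_{n+1}}}(X_{n+1},Y_{n+1})$ are almost surely distinct. Assume further that there exists a constant $c>0$ such that the conditional density $p(\cdot\mid D,X_{n+1})$ of $Y_{n+1}$ on $\mathcal Y$ is bounded above by $c$. Then for every $\alpha\in(0,1)$, $$\mathbb P\big[Y_{n+1}\in\tilde C_\alpha(X_{n+1})\big]\le1-\alpha+\frac1{n+1}+c\,\mathbb E_{D,X_{n+1}}\big[\mathrm{THK}_\alpha(X_{n+1})\big].$$
   Context: Let $\mathcal X\subset\mathbb R^d$, $\mathcal Y\subset\mathbb R$, $D=\{(X_1,Y_1),\dots,(X_n,Y_n)\}$, and a further pair $(X_{n+1},Y_{n+1})$. For $y\in\mathcal Y$, $D^y=D\cup\{(X_{n+1},y)\}$, $\hat f_{D^y}$ a predictor trained on $D^y$, $s:\mathcal Y\times\mathcal Y\to\mathbb R_+$ a non-conformity function, $S_{D^y}(X_i,Y_i)=s(Y_i,\hat f_{D^y}(X_i))$ ($i\le n$), $S_{D^y}(X_{n+1},y)=s(y,\hat f_{D^y}(X_{n+1}))$, $\hat\pi_D(X_{n+1},y)=\frac{1+\sum_{i=1}^n\mathbb 1\{S_{D^y}(X_i,Y_i)\ge S_{D^y}(X_{n+1},y)\}}{n+1}$, $\hat C_\alpha(X_{n+1})=\{y:\hat\pi_D(X_{n+1},y)>\alpha\}$.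 For every $y$, let $\tilde S_{D^y}(X_i,Y_i)$, $\tilde S_{D^y}(X_{n+1},y)$ be approximate scores and $0\le\tau_i(y)<\infty$ with $|S_{D^y}(X_i,Y_i)-\tilde S_{D^y}(X_i,Y_i)|\le\tau_i(y)$ ($i\le n$) and $|S_{D^y}(X_{n+1},y)-\tilde S_{D^y}(X_{n+1},y)|\le\tau_{n+1}(y)$; $\tilde\pi_D(X_{n+1},y)=\frac{1+\sum_{i=1}^n\mathbb 1\{\tilde S_{D^y}(X_i,Y_i)+\tau_i(y)\ge\tilde S_{D^y}(X_{n+1},y)-\tau_{n+1}(y)\}}{n+1}$, $\tilde C_\alpha(X_{n+1})=\{y:\tilde\pi_D(X_{n+1},y)>\alpha\}$, and $\mathrm{THK}_\alpha(X_{n+1})=\mathcal L(\tilde C_\alpha(X_{n+1})\,\Delta\,\hat C_\alpha(X_{n+1}))$ ($\mathcal L$ Lebesgue measure, $\Delta$ symmetric difference). *)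

theory Defs
  imports "HOL-Probability.Probability"
begin

text \<open>Data points are indexed 1..n+1; index n+1 (= Suc n) is the test point.
  A data set of size m is an (extensional) function on {1..m}.\<close>

definition augment :: "nat \<Rightarrow> (nat \<Rightarrow> 'a \<times> real) \<Rightarrow> 'a \<Rightarrow> real \<Rightarrow> (nat \<Rightarrow> 'a \<times> real)" where
  "augment n D x y = (\<lambda>i\<in>{1..Suc n}. if i = Suc n then (x, y) else D i)"

definition score :: "(real \<Rightarrow> real \<Rightarrow> real) \<Rightarrow> ((nat \<Rightarrow> 'a \<times> real) \<Rightarrow> 'a \<Rightarrow> real)
    \<Rightarrow> (nat \<Rightarrow> 'a \<times> real) \<Rightarrow> nat \<Rightarrow> real" where
  "score s fit g i = s (snd (g i)) (fit g (fst (g i)))"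

definition pval_exact :: "nat \<Rightarrow> (real \<Rightarrow> real \<Rightarrow> real) \<Rightarrow> ((nat \<Rightarrow> 'a \<times> real) \<Rightarrow> 'a \<Rightarrow> real)
    \<Rightarrow> (nat \<Rightarrow> 'a \<times> real) \<Rightarrow> 'a \<Rightarrow> real \<Rightarrow> real" where
  "pval_exact n s fit D x y =
     (let g = augment n D x y in
      (1 + real (card {i \<in> {1..n}. score s fit g i \<ge> score s fit g (Suc n)})) / (real n + 1))"

definition conf_exact :: "nat \<Rightarrow> (real \<Rightarrow> real \<Rightarrow> real) \<Rightarrow> ((nat \<Rightarrow> 'a \<times> real) \<Rightarrow> 'a \<Rightarrow> real)
    \<Rightarrow> real set \<Rightarrow> real \<Rightarrow> (nat \<Rightarrow> 'a \<times> real) \<Rightarrow> 'a \<Rightarrow> real set" where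
  "conf_exact n s fit Yset \<alpha> D x = {y \<in> Yset. pval_exact n s fit D x y > \<alpha>}"

text \<open>Approximate scores Stil g i and error bounds tau g i, for the augmented data set g = D^y.\<close>
definition pval_approx :: "nat \<Rightarrow> ((nat \<Rightarrow> 'a \<times> real) \<Rightarrow> nat \<Rightarrow> real) \<Rightarrow> ((nat \<Rightarrow> 'a \<times> real) \<Rightarrow> nat \<Rightarrow> real)
    \<Rightarrow> (nat \<Rightarrow> 'a \<times> real) \<Rightarrow> 'a \<Rightarrow> real \<Rightarrow> real" where
  "pval_approx n Stil tau D x y =
     (let g = augment n D x y in
      (1 + real (card {i \<in> {1..n}. Stil g i + tau g i \<ge> Stil g (Suc n) - tau g (Suc n)})) / (real n + 1))"

definition conf_approx :: "nat \<Rightarrow> ((nat \<Rightarrow> 'a \<times> real) \<Rightarrow> nat \<Rightarrow> real) \<Rightarrow> ((nat \<Rightarrow> 'a \<times> real) \<Rightarrow> nat \<Rightarrow> real)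
    \<Rightarrow> real set \<Rightarrow> real \<Rightarrow> (nat \<Rightarrow> 'a \<times> real) \<Rightarrow> 'a \<Rightarrow> real set" where
  "conf_approx n Stil tau Yset \<alpha> D x = {y \<in> Yset. pval_approx n Stil tau D x y > \<alpha>}"

definition THK :: "nat \<Rightarrow> (real \<Rightarrow> real \<Rightarrow> real) \<Rightarrow> ((nat \<Rightarrow> 'a \<times> real) \<Rightarrow> 'a \<Rightarrow> real)
    \<Rightarrow> ((nat \<Rightarrow> 'a \<times> real) \<Rightarrow> nat \<Rightarrow> real) \<Rightarrow> ((nat \<Rightarrow> 'a \<times> real) \<Rightarrow> nat \<Rightarrow> real)
    \<Rightarrow> real set \<Rightarrow> real \<Rightarrow> (nat \<Rightarrow> 'a \<times> real) \<Rightarrow> 'a \<Rightarrow> ennreal" where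
  "THK n s fit Stil tau Yset \<alpha> D x =
     emeasure lborel ((conf_approx n Stil tau Yset \<alpha> D x - conf_exact n s fit Yset \<alpha> D x)
                    \<union> (conf_exact n s fit Yset \<alpha> D x - conf_approx n Stil tau Yset \<alpha> D x))"

end

theory Submission
  imports Defs
begin

text \<open>The exact p-value of a candidate \<open>y\<close> is \<open>R / (n + 1)\<close>, where the upper rank \<open>R\<close> counts the
  scores of the augmented sample that are at least the test score. So the test label lies in the exact
  set iff the upper rank of the test point exceeds \<open>m = \<lfloor>\<alpha> (n + 1)\<rfloor>\<close>. Exchangeability of the data and
  permutation invariance of the predictor make this event equally likely for each of the \<open>n + 1\<close>
  points, and almost surely distinct scores have distinct upper ranks, so at most \<open>n + 1 - m\<close> points
  exceed \<open>m\<close> at once; hence its probability is at most \<open>(n + 1 - m) / (n + 1) \<le> 1 - \<alpha> + 1 / (n + 1)\<close>.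
  Outside that event the label lies in the symmetric difference of the approximate and exact sets;
  the probability of this is the expectation of the integral of the conditional density \<open>p\<close> over
  the difference, hence at most \<open>c E[THK]\<close>.\<close>

definition upper_rank :: "('i \<Rightarrow> 'b::linorder) \<Rightarrow> 'i set \<Rightarrow> 'i \<Rightarrow> nat" where
  "upper_rank S I j = card {k \<in> I. S j \<le> S k}"

lemma upper_rank_le_card:
  assumes "finite I"
  shows "upper_rank S I j \<le> card I"
  unfolding upper_rank_def using assms by (intro card_mono) auto

lemma upper_rank_strict_antimono:
  assumes "finite I" "j \<in> I" "l \<in> I" "S j < S l"
  shows "upper_rank S I l < upper_rank S I j"
  unfolding upper_rank_def
proof (rule psubset_card_mono)
  show "{k \<in> I. S l \<le> S k} \<subset> {k \<in> I. S j \<le> S k}"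
    using assms by force
qed (use assms in auto)

lemma inj_on_upper_rank:
  assumes "finite I" "inj_on S I"
  shows "inj_on (upper_rank S I) I"
proof (rule inj_onI)
  fix j l assume jl: "j \<in> I" "l \<in> I" "upper_rank S I j = upper_rank S I l"
  then have "\<not> S j < S l" "\<not> S l < S j"
    using upper_rank_strict_antimono[OF assms(1)] by (metis less_irrefl)+
  then show "j = l"
    using assms(2) jl by (metis inj_onD linorder_cases)
qed

lemma card_upper_rank_greater_le:
  assumes "finite I" "inj_on S I"
  shows "card {j \<in> I. m < upper_rank S I j} \<le> card I - m"
proof -
  have "card {j \<in> I. m < upper_rank S I j} = card (upper_rank S I ` {j \<in> I. m < upper_rank S I j})"
    using inj_on_upper_rank[OF assms] by (intro card_image[symmetric]) (auto intro: inj_on_subset)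
  also have "\<dots> \<le> card {m<..card I}"
    using upper_rank_le_card[OF assms(1)] by (intro card_mono) auto
  finally show ?thesis by simp
qed

lemma upper_rank_permute:
  assumes "\<sigma> permutes I" and "\<And>k. k \<in> I \<Longrightarrow> S' k = S (\<sigma> k)" and "j \<in> I"
  shows "upper_rank S' I j = upper_rank S I (\<sigma> j)"
proof -
  have "bij_betw \<sigma> {k \<in> I. S (\<sigma> j) \<le> S (\<sigma> k)} {k \<in> I. S (\<sigma> j) \<le> S k}"
    by (rule bij_betw_Collect[OF permutes_imp_bij[OF assms(1)]]) simp
  then show ?thesis
    unfolding upper_rank_def using assms(2,3) by (simp add: bij_betw_same_card cong: conj_cong)
qed

lemma pval_exact_eq_upper_rank:
  "pval_exact n s fit D x y = real (upper_rank (score s fit (augment n D x y)) {1..Suc n} (Suc n)) / (real n + 1)"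
proof -
  have "{k \<in> {1..Suc n}. S (Suc n) \<le> S k} = insert (Suc n) {i \<in> {1..n}. S (Suc n) \<le> S i}" for S :: "nat \<Rightarrow> real"
    by auto
  then show ?thesis
    unfolding pval_exact_def upper_rank_def Let_def by simp
qed

lemma borel_measurable_card_Collect:
  assumes "finite I" "\<And>k. k \<in> I \<Longrightarrow> Measurable.pred N (P k)"
  shows "(\<lambda>x. real (card {k \<in> I. P k x})) \<in> borel_measurable N"
proof -
  have "real (card {k \<in> I. P k x}) = (\<Sum>k\<in>I. if P k x then 1 else 0)" for x
    using assms(1) by (simp add: sum.inter_filter[symmetric])
  moreover have "(\<lambda>x. \<Sum>k\<in>I. if P k x then 1 else 0 :: real) \<in> borel_measurable N"
    using assms(2) by measurable
  ultimately show ?thesis by simp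
qed

lemma borel_measurable_upper_rank:
  fixes F :: "'x \<Rightarrow> 'i \<Rightarrow> real"
  assumes "finite I" "\<And>i. i \<in> I \<Longrightarrow> (\<lambda>x. F x i) \<in> borel_measurable N" "j \<in> I"
  shows "(\<lambda>x. real (upper_rank (F x) I j)) \<in> borel_measurable N"
  unfolding upper_rank_def
proof (intro borel_measurable_card_Collect[OF assms(1)])
  fix k assume "k \<in> I"
  then show "Measurable.pred N (\<lambda>x. F x j \<le> F x k)"
    unfolding pred_def using assms(2,3) by (intro borel_measurable_le) simp_all
qed

lemma sets_upper_rank_greater:
  fixes F :: "'x \<Rightarrow> 'i \<Rightarrow> real"
  assumes "finite I" "\<And>i. i \<in> I \<Longrightarrow> (\<lambda>x. F x i) \<in> borel_measurable N" "j \<in> I"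
  shows "{x \<in> space N. m < upper_rank (F x) I j} \<in> sets N"
proof -
  have "{x \<in> space N. real m < real (upper_rank (F x) I j)} \<in> sets N"
    using borel_measurable_upper_rank[OF assms] by (intro borel_measurable_less) auto
  then show ?thesis by simp
qed

lemma borel_measurable_score:
  fixes fit :: "(nat \<Rightarrow> 'a::second_countable_topology \<times> real) \<Rightarrow> 'a \<Rightarrow> real"
  assumes fit: "(\<lambda>(g, x). fit g x) \<in> borel_measurable (PiM I (\<lambda>_. borel) \<Otimes>\<^sub>M borel)"
    and s: "case_prod s \<in> borel_measurable borel" and i: "i \<in> I"
  shows "(\<lambda>g. score s fit g i) \<in> borel_measurable (PiM I (\<lambda>_. borel))"
proof -
  have comp: "(\<lambda>g. g i) \<in> measurable (PiM I (\<lambda>_. borel)) (borel \<Otimes>\<^sub>M borel :: ('a \<times> real) measure)"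
    using measurable_component_singleton[OF i] by (simp add: borel_prod)
  from measurable_compose[OF comp measurable_fst]
  have fst: "(\<lambda>g :: nat \<Rightarrow> 'a \<times> real. fst (g i)) \<in> borel_measurable (PiM I (\<lambda>_. borel))" by (simp add: comp_def)
  from measurable_compose[OF comp measurable_snd]
  have snd: "(\<lambda>g :: nat \<Rightarrow> 'a \<times> real. snd (g i)) \<in> borel_measurable (PiM I (\<lambda>_. borel))" by (simp add: comp_def)
  have "(\<lambda>g. fit g (fst (g i))) \<in> borel_measurable (PiM I (\<lambda>_. borel))"
    using measurable_compose[OF measurable_Pair[OF measurable_ident_sets[OF refl] fst] fit] by simp
  from measurable_compose[OF borel_measurable_Pair[OF snd this] s] show ?thesis
    unfolding score_def by simp
qed

lemma measurable_augment:
  "(\<lambda>z. augment n (fst (fst z)) (snd (fst z)) (snd z))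
     \<in> measurable ((PiM {1..n} (\<lambda>_. borel) \<Otimes>\<^sub>M borel) \<Otimes>\<^sub>M borel)
         (PiM {1..Suc n} (\<lambda>_. borel :: ('a::second_countable_topology \<times> real) measure))"
  unfolding augment_def
proof (intro measurable_restrict)
  fix i assume i: "i \<in> {1..Suc n}"
  show "(\<lambda>z :: ((nat \<Rightarrow> 'a \<times> real) \<times> 'a) \<times> real. if i = Suc n then (snd (fst z), snd z) else fst (fst z) i)
      \<in> borel_measurable ((PiM {1..n} (\<lambda>_. borel) \<Otimes>\<^sub>M borel) \<Otimes>\<^sub>M borel)"
  proof (cases "i = Suc n")
    case True
    have "(\<lambda>z :: ((nat \<Rightarrow> 'a \<times> real) \<times> 'a) \<times> real. (snd (fst z), snd z))
        \<in> borel_measurable ((PiM {1..n} (\<lambda>_. borel) \<Otimes>\<^sub>M borel) \<Otimes>\<^sub>M borel)"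
      by (intro borel_measurable_Pair) measurable
    with True show ?thesis by simp
  next
    case False
    with i have "(\<lambda>g. g i) \<in> measurable (PiM {1..n} (\<lambda>_. borel :: ('a \<times> real) measure)) borel"
      by (intro measurable_component_singleton) auto
    then have "(\<lambda>z :: ((nat \<Rightarrow> 'a \<times> real) \<times> 'a) \<times> real. fst (fst z) i)
        \<in> borel_measurable ((PiM {1..n} (\<lambda>_. borel) \<Otimes>\<^sub>M borel) \<Otimes>\<^sub>M borel)"
      by measurable
    with False show ?thesis by simp
  qed
qed

lemma borel_measurable_pval_exact:
  fixes fit :: "(nat \<Rightarrow> 'a::second_countable_topology \<times> real) \<Rightarrow> 'a \<Rightarrow> real"
  assumes fit: "(\<lambda>(g, x). fit g x) \<in> borel_measurable (PiM {1..Suc n} (\<lambda>_. borel) \<Otimes>\<^sub>M borel)"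
    and s: "case_prod s \<in> borel_measurable borel"
  shows "(\<lambda>z. pval_exact n s fit (fst (fst z)) (snd (fst z)) (snd z))
    \<in> borel_measurable ((PiM {1..n} (\<lambda>_. borel) \<Otimes>\<^sub>M borel) \<Otimes>\<^sub>M borel)"
proof -
  have "(\<lambda>g. real (upper_rank (score s fit g) {1..Suc n} (Suc n))) \<in> borel_measurable (PiM {1..Suc n} (\<lambda>_. borel))"
    using borel_measurable_score[OF fit s] by (intro borel_measurable_upper_rank) auto
  from measurable_compose[OF measurable_augment this] show ?thesis
    unfolding pval_exact_eq_upper_rank by measurable
qed

lemma borel_measurable_pval_approx:
  fixes Stil tau :: "(nat \<Rightarrow> 'a::second_countable_topology \<times> real) \<Rightarrow> nat \<Rightarrow> real"
  assumes Stil: "\<And>i. (\<lambda>g. Stil g i) \<in> borel_measurable (PiM {1..Suc n} (\<lambda>_. borel))"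
    and tau: "\<And>i. (\<lambda>g. tau g i) \<in> borel_measurable (PiM {1..Suc n} (\<lambda>_. borel))"
  shows "(\<lambda>z. pval_approx n Stil tau (fst (fst z)) (snd (fst z)) (snd z))
    \<in> borel_measurable ((PiM {1..n} (\<lambda>_. borel) \<Otimes>\<^sub>M borel) \<Otimes>\<^sub>M borel)"
proof -
  note measurable_augment[measurable] Stil[measurable] tau[measurable]
  show ?thesis
    unfolding pval_approx_def Let_def
    by (intro borel_measurable_divide borel_measurable_add borel_measurable_const
        borel_measurable_card_Collect finite_atLeastAtMost) measurable
qed

lemma pred_mem_conf_exact:
  fixes fit :: "(nat \<Rightarrow> 'a::second_countable_topology \<times> real) \<Rightarrow> 'a \<Rightarrow> real"
  assumes "Yset \<in> sets borel"
    and "(\<lambda>(g, x). fit g x) \<in> borel_measurable (PiM {1..Suc n} (\<lambda>_. borel) \<Otimes>\<^sub>M borel)"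
    and "case_prod s \<in> borel_measurable borel"
  shows "Measurable.pred ((PiM {1..n} (\<lambda>_. borel) \<Otimes>\<^sub>M borel) \<Otimes>\<^sub>M borel)
    (\<lambda>z. snd z \<in> conf_exact n s fit Yset \<alpha> (fst (fst z)) (snd (fst z)))"
  unfolding conf_exact_def using assms(1) borel_measurable_pval_exact[OF assms(2,3)] by simp measurable

lemma pred_mem_conf_approx:
  fixes Stil tau :: "(nat \<Rightarrow> 'a::second_countable_topology \<times> real) \<Rightarrow> nat \<Rightarrow> real"
  assumes "Yset \<in> sets borel"
    and "\<And>i. (\<lambda>g. Stil g i) \<in> borel_measurable (PiM {1..Suc n} (\<lambda>_. borel))"
    and "\<And>i. (\<lambda>g. tau g i) \<in> borel_measurable (PiM {1..Suc n} (\<lambda>_. borel))"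
  shows "Measurable.pred ((PiM {1..n} (\<lambda>_. borel) \<Otimes>\<^sub>M borel) \<Otimes>\<^sub>M borel)
    (\<lambda>z. snd z \<in> conf_approx n Stil tau Yset \<alpha> (fst (fst z)) (snd (fst z)))"
  unfolding conf_approx_def using assms(1) borel_measurable_pval_approx[OF assms(2,3)] by simp measurable

lemma sum_prob_upper_rank_greater_le:
  fixes F :: "'w \<Rightarrow> 'i \<Rightarrow> real"
  assumes M: "prob_space M" and I: "finite I"
    and F: "\<And>i. i \<in> I \<Longrightarrow> (\<lambda>\<omega>. F \<omega> i) \<in> borel_measurable M"
    and inj: "AE \<omega> in M. inj_on (F \<omega>) I"
  shows "(\<Sum>k\<in>I. measure M {\<omega> \<in> space M. m < upper_rank (F \<omega>) I k}) \<le> real (card I - m)"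
proof -
  interpret prob_space M by (rule M)
  define A where "A k = {\<omega> \<in> space M. m < upper_rank (F \<omega>) I k}" for k
  have A_sets: "A k \<in> sets M" if "k \<in> I" for k
    unfolding A_def using I F that by (rule sets_upper_rank_greater)
  have count: "(\<Sum>k\<in>I. indicator (A k) \<omega>) = real (card {k \<in> I. m < upper_rank (F \<omega>) I k})"
    if "\<omega> \<in> space M" for \<omega>
    using that I by (simp add: A_def indicator_def sum.If_cases Int_def)
  have "(\<Sum>k\<in>I. measure M (A k)) = (\<integral>\<omega>. (\<Sum>k\<in>I. indicator (A k) \<omega>) \<partial>M)"
    using A_sets by (subst Bochner_Integration.integral_sum) (auto simp: emeasure_finite less_top[symmetric])
  also have "\<dots> \<le> (\<integral>\<omega>. real (card I - m) \<partial>M)"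
  proof (rule integral_mono_AE)
    show "AE \<omega> in M. (\<Sum>k\<in>I. indicator (A k) \<omega>) \<le> real (card I - m)"
      using inj AE_space by eventually_elim (use I in \<open>simp add: count card_upper_rank_greater_le\<close>)
  qed (use A_sets in \<open>auto simp: emeasure_finite less_top[symmetric]\<close>)
  also have "\<dots> = real (card I - m)"
    by (simp add: prob_space)
  finally show ?thesis unfolding A_def .
qed

lemma prob_upper_rank_greater_permute:
  fixes Z :: "'w \<Rightarrow> 'i \<Rightarrow> 'b" and T :: "('i \<Rightarrow> 'b) \<Rightarrow> 'i \<Rightarrow> real"
  assumes I: "finite I" "j \<in> I" and \<sigma>: "\<sigma> permutes I"
    and Z: "Z \<in> measurable M (PiM I (\<lambda>_. N))"
    and exch: "distr M (PiM I (\<lambda>_. N)) (\<lambda>\<omega>. \<lambda>i\<in>I. Z \<omega> (\<sigma> i)) = distr M (PiM I (\<lambda>_. N)) Z"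
    and T: "\<And>i. i \<in> I \<Longrightarrow> (\<lambda>g. T g i) \<in> borel_measurable (PiM I (\<lambda>_. N))"
    and T_permute: "\<And>g i. g \<in> extensional I \<Longrightarrow> i \<in> I \<Longrightarrow> T (\<lambda>k\<in>I. g (\<sigma> k)) i = T g (\<sigma> i)"
  shows "measure M {\<omega> \<in> space M. m < upper_rank (T (Z \<omega>)) I (\<sigma> j)}
       = measure M {\<omega> \<in> space M. m < upper_rank (T (Z \<omega>)) I j}"
proof -
  define Z' where "Z' \<omega> = (\<lambda>i\<in>I. Z \<omega> (\<sigma> i))" for \<omega>
  have Z': "Z' \<in> measurable M (PiM I (\<lambda>_. N))"
    unfolding Z'_def using Z permutes_in_image[OF \<sigma>]
    by (intro measurable_restrict) (auto intro: measurable_compose[OF _ measurable_component_singleton])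
  define B where "B = {g \<in> space (PiM I (\<lambda>_. N)). m < upper_rank (T g) I j}"
  have B: "B \<in> sets (PiM I (\<lambda>_. N))"
    unfolding B_def using I(1) T I(2) by (rule sets_upper_rank_greater)
  have "upper_rank (T (Z' \<omega>)) I j = upper_rank (T (Z \<omega>)) I (\<sigma> j)" if "\<omega> \<in> space M" for \<omega>
  proof (rule upper_rank_permute[OF \<sigma> _ I(2)])
    have "Z \<omega> \<in> extensional I"
      using measurable_space[OF Z that] by (simp add: space_PiM PiE_def)
    then show "T (Z' \<omega>) k = T (Z \<omega>) (\<sigma> k)" if "k \<in> I" for k
      unfolding Z'_def using T_permute that by simp
  qed
  then have "{\<omega> \<in> space M. m < upper_rank (T (Z \<omega>)) I (\<sigma> j)} = Z' -` B \<inter> space M"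
    using measurable_space[OF Z'] by (auto simp: B_def)
  moreover have "{\<omega> \<in> space M. m < upper_rank (T (Z \<omega>)) I j} = Z -` B \<inter> space M"
    using measurable_space[OF Z] by (auto simp: B_def)
  moreover have "measure M (Z' -` B \<inter> space M) = measure M (Z -` B \<inter> space M)"
    using exch unfolding Z'_def[abs_def] by (simp flip: measure_distr[OF Z B] measure_distr[OF Z' B, unfolded Z'_def[abs_def]])
  ultimately show ?thesis by simp
qed

lemma of_nat_diff_nat_floor_le:
  fixes \<alpha> :: real
  assumes "0 \<le> \<alpha>" "\<alpha> \<le> 1"
  shows "real (N - nat \<lfloor>\<alpha> * N\<rfloor>) \<le> N * (1 - \<alpha>) + 1"
proof -
  have "\<alpha> * N \<le> N"
    using assms by (simp add: mult_left_le_one_le)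
  then have "nat \<lfloor>\<alpha> * N\<rfloor> \<le> N"
    by (simp add: nat_le_iff floor_le_iff)
  moreover have "\<alpha> * N - 1 < nat \<lfloor>\<alpha> * N\<rfloor>"
    using assms by linarith
  ultimately show ?thesis
    by (simp add: of_nat_diff algebra_simps)
qed

lemma exchangeable_prob_upper_rank_greater_le:
  fixes Z :: "'w \<Rightarrow> 'i \<Rightarrow> 'b" and T :: "('i \<Rightarrow> 'b) \<Rightarrow> 'i \<Rightarrow> real" and \<alpha> :: real
  assumes M: "prob_space M" and I: "finite I" "j \<in> I"
    and Z: "Z \<in> measurable M (PiM I (\<lambda>_. N))"
    and exch: "\<And>\<sigma>. \<sigma> permutes I \<Longrightarrow>
      distr M (PiM I (\<lambda>_. N)) (\<lambda>\<omega>. \<lambda>i\<in>I. Z \<omega> (\<sigma> i)) = distr M (PiM I (\<lambda>_. N)) Z"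
    and T: "\<And>i. i \<in> I \<Longrightarrow> (\<lambda>g. T g i) \<in> borel_measurable (PiM I (\<lambda>_. N))"
    and T_permute: "\<And>\<sigma> g i. \<sigma> permutes I \<Longrightarrow> g \<in> extensional I \<Longrightarrow> i \<in> I \<Longrightarrow>
      T (\<lambda>k\<in>I. g (\<sigma> k)) i = T g (\<sigma> i)"
    and inj: "AE \<omega> in M. inj_on (T (Z \<omega>)) I"
    and \<alpha>: "0 \<le> \<alpha>" "\<alpha> \<le> 1"
  shows "measure M {\<omega> \<in> space M. \<alpha> * card I < upper_rank (T (Z \<omega>)) I j} \<le> 1 - \<alpha> + 1 / card I"
proof -
  define m where "m = nat \<lfloor>\<alpha> * card I\<rfloor>"
  define P where "P k = measure M {\<omega> \<in> space M. m < upper_rank (T (Z \<omega>)) I k}" for k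
  have "P k = P j" if "k \<in> I" for k
  proof -
    have \<sigma>: "Transposition.transpose j k permutes I"
      using I(2) that by (rule permutes_swap_id)
    have "P (Transposition.transpose j k j) = P j"
      unfolding P_def
      by (rule prob_upper_rank_greater_permute[OF I \<sigma> Z exch[OF \<sigma>]]) (erule T, erule (1) T_permute[OF \<sigma>])
    then show ?thesis by simp
  qed
  then have "card I * P j = (\<Sum>k\<in>I. P k)"
    by simp
  also have "\<dots> \<le> card I - m"
    unfolding P_def
    using sum_prob_upper_rank_greater_le[OF M I(1) measurable_compose[OF Z T] inj] by simp
  also have "\<dots> \<le> card I * (1 - \<alpha>) + 1"
    unfolding m_def using \<alpha> by (rule of_nat_diff_nat_floor_le)
  finally have "card I * P j \<le> card I * (1 - \<alpha>) + 1" .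
  moreover have "0 < real (card I)"
    using I by (auto simp: card_gt_0_iff)
  ultimately have "P j \<le> 1 - \<alpha> + 1 / card I"
    by (simp add: field_simps)
  moreover have "\<alpha> * card I < r \<longleftrightarrow> m < r" for r :: nat
    unfolding m_def using \<alpha> by (simp add: nat_less_iff floor_less_iff)
  ultimately show ?thesis
    unfolding P_def by simp
qed

lemma distr_pair_eq_density:
  fixes W :: "'w \<Rightarrow> 'b" and Y :: "'w \<Rightarrow> real" and p :: "'b \<times> real \<Rightarrow> real"
  assumes M: "finite_measure M" and W: "W \<in> measurable M N" and Y: "Y \<in> borel_measurable M"
    and p: "p \<in> borel_measurable (N \<Otimes>\<^sub>M borel)"
    and dens: "\<And>A B. A \<in> sets borel \<Longrightarrow> B \<in> sets N \<Longrightarrow>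
      emeasure M {\<omega> \<in> space M. Y \<omega> \<in> A \<and> W \<omega> \<in> B}
      = (\<integral>\<^sup>+ w. indicator B w * (\<integral>\<^sup>+ y. indicator A y * ennreal (p (w, y)) \<partial>lborel) \<partial>distr M N W)"
  shows "distr M (N \<Otimes>\<^sub>M lborel) (\<lambda>\<omega>. (W \<omega>, Y \<omega>)) = density (distr M N W \<Otimes>\<^sub>M lborel) p"
proof (rule measure_eqI_generator_eq[OF Int_stable_pair_measure_generator pair_measure_closed])
  let ?G = "{a \<times> b | a b. a \<in> sets N \<and> b \<in> sets lborel}"
  have WY: "(\<lambda>\<omega>. (W \<omega>, Y \<omega>)) \<in> measurable M (N \<Otimes>\<^sub>M lborel)"
    using W Y by measurable
  have sets_PW: "sets (distr M N W \<Otimes>\<^sub>M lborel) = sets (N \<Otimes>\<^sub>M borel)"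
    by (intro sets_pair_measure_cong sets_distr sets_lborel)
  have p': "p \<in> borel_measurable (distr M N W \<Otimes>\<^sub>M lborel)"
    using p by (simp add: measurable_cong_sets[OF sets_PW refl])
  show "sets (distr M (N \<Otimes>\<^sub>M lborel) (\<lambda>\<omega>. (W \<omega>, Y \<omega>))) = sigma_sets (space N \<times> space lborel) ?G"
    by (simp add: sets_pair_measure)
  show "sets (density (distr M N W \<Otimes>\<^sub>M lborel) p) = sigma_sets (space N \<times> space lborel) ?G"
    by (simp add: sets_pair_measure)
  show "range (\<lambda>_. space N \<times> space lborel) \<subseteq> ?G"
    by blast
  show "(\<Union>i. space N \<times> space lborel) = space N \<times> space lborel"
    by simp
  show "emeasure (distr M (N \<Otimes>\<^sub>M lborel) (\<lambda>\<omega>. (W \<omega>, Y \<omega>))) (space N \<times> space lborel) \<noteq> \<infinity>" for i :: nat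
    using M WY by (simp add: emeasure_distr space_pair_measure finite_measure.emeasure_finite)
  fix Q :: "('b \<times> real) set" assume "Q \<in> ?G"
  then obtain a b where Q: "Q = a \<times> b" and a: "a \<in> sets N" and b: "b \<in> sets borel"
    by auto
  have ab: "Q \<in> sets (distr M N W \<Otimes>\<^sub>M lborel)"
    unfolding Q sets_PW using a b by (intro pair_measureI) auto
  have pQ: "(\<lambda>z. ennreal (p z) * indicator Q z) \<in> borel_measurable (distr M N W \<Otimes>\<^sub>M lborel)"
    using measurable_compose[OF p' measurable_ennreal] ab by measurable
  have "emeasure (distr M (N \<Otimes>\<^sub>M lborel) (\<lambda>\<omega>. (W \<omega>, Y \<omega>))) Q
      = emeasure M {\<omega> \<in> space M. Y \<omega> \<in> b \<and> W \<omega> \<in> a}"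
    using a b WY unfolding Q by (subst emeasure_distr) (auto intro!: arg_cong[where f = "emeasure M"])
  also have "\<dots> = (\<integral>\<^sup>+ w. indicator a w * (\<integral>\<^sup>+ y. indicator b y * ennreal (p (w, y)) \<partial>lborel) \<partial>distr M N W)"
    using a b by (rule dens[rotated])
  also have "\<dots> = (\<integral>\<^sup>+ w. (\<integral>\<^sup>+ y. ennreal (p (w, y)) * indicator Q (w, y) \<partial>lborel) \<partial>distr M N W)"
  proof (rule nn_integral_cong)
    fix w assume "w \<in> space (distr M N W)"
    then have "(\<lambda>y. p (w, y)) \<in> borel_measurable lborel"
      using measurable_compose_Pair1[OF _ p'] by simp
    then show "indicator a w * (\<integral>\<^sup>+ y. indicator b y * ennreal (p (w, y)) \<partial>lborel)
        = (\<integral>\<^sup>+ y. ennreal (p (w, y)) * indicator Q (w, y) \<partial>lborel)"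
      using b by (subst nn_integral_cmult[symmetric]) (auto simp: Q indicator_times mult_ac)
  qed
  also have "\<dots> = (\<integral>\<^sup>+ z. ennreal (p z) * indicator Q z \<partial>(distr M N W \<Otimes>\<^sub>M lborel))"
    by (rule lborel.nn_integral_fst[OF pQ])
  also have "\<dots> = emeasure (density (distr M N W \<Otimes>\<^sub>M lborel) p) Q"
    using p' ab by (subst emeasure_density) auto
  finally show "emeasure (distr M (N \<Otimes>\<^sub>M lborel) (\<lambda>\<omega>. (W \<omega>, Y \<omega>))) Q
      = emeasure (density (distr M N W \<Otimes>\<^sub>M lborel) p) Q" .
qed

lemma emeasure_mem_random_set_le:
  fixes W :: "'w \<Rightarrow> 'b" and Y :: "'w \<Rightarrow> real" and p :: "'b \<times> real \<Rightarrow> real"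
    and C :: "'b \<Rightarrow> real set"
  assumes M: "finite_measure M" and W: "W \<in> measurable M N" and Y: "Y \<in> borel_measurable M"
    and p: "p \<in> borel_measurable (N \<Otimes>\<^sub>M borel)"
    and dens: "\<And>A B. A \<in> sets borel \<Longrightarrow> B \<in> sets N \<Longrightarrow>
      emeasure M {\<omega> \<in> space M. Y \<omega> \<in> A \<and> W \<omega> \<in> B}
      = (\<integral>\<^sup>+ w. indicator B w * (\<integral>\<^sup>+ y. indicator A y * ennreal (p (w, y)) \<partial>lborel) \<partial>distr M N W)"
    and C: "{z \<in> space (N \<Otimes>\<^sub>M borel). snd z \<in> C (fst z)} \<in> sets (N \<Otimes>\<^sub>M borel)"
    and p_bound: "\<And>w y. w \<in> space N \<Longrightarrow> y \<in> C w \<Longrightarrow> p (w, y) \<le> c"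
  shows "emeasure M {\<omega> \<in> space M. Y \<omega> \<in> C (W \<omega>)} \<le> ennreal c * (\<integral>\<^sup>+ \<omega>. emeasure lborel (C (W \<omega>)) \<partial>M)"
proof -
  define E where "E = {z \<in> space (N \<Otimes>\<^sub>M borel). snd z \<in> C (fst z)}"
  define G where "G w = (\<integral>\<^sup>+ y. ennreal (p (w, y)) * indicator E (w, y) \<partial>lborel)" for w
  have sets_PW: "sets (distr M N W \<Otimes>\<^sub>M lborel) = sets (N \<Otimes>\<^sub>M borel)"
    by (intro sets_pair_measure_cong sets_distr sets_lborel)
  have sets_Nl: "sets (N \<Otimes>\<^sub>M lborel) = sets (N \<Otimes>\<^sub>M borel)"
    by (intro sets_pair_measure_cong refl sets_lborel)
  have E_PW: "E \<in> sets (distr M N W \<Otimes>\<^sub>M lborel)"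
    using C unfolding E_def sets_PW .
  have E_N: "E \<in> sets (N \<Otimes>\<^sub>M lborel)"
    using C unfolding E_def sets_Nl .
  have E_slice: "Pair w -` E = C w" if "w \<in> space N" for w
    using that unfolding E_def by (auto simp: space_pair_measure)
  have WY: "(\<lambda>\<omega>. (W \<omega>, Y \<omega>)) \<in> measurable M (N \<Otimes>\<^sub>M lborel)"
    using W Y by measurable
  have pE: "(\<lambda>z. ennreal (p z) * indicator E z) \<in> borel_measurable (distr M N W \<Otimes>\<^sub>M lborel)"
    using measurable_compose[OF p measurable_ennreal] E_PW
    unfolding measurable_cong_sets[OF sets_PW refl] by measurable
  have G: "G \<in> borel_measurable N"
    using lborel.borel_measurable_nn_integral_fst[OF pE] unfolding G_def by simp
  have L: "(\<lambda>w. emeasure lborel (C w)) \<in> borel_measurable N"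
    using lborel.measurable_emeasure_Pair[OF E_N] by (rule measurable_cong[THEN iffD1, rotated]) (simp add: E_slice)
  have G_le: "G w \<le> ennreal c * emeasure lborel (C w)" if "w \<in> space N" for w
  proof -
    have "G w \<le> (\<integral>\<^sup>+ y. ennreal c * indicator (C w) y \<partial>lborel)"
      unfolding G_def using p_bound[OF that] E_slice[OF that]
      by (intro nn_integral_mono) (auto simp: indicator_def ennreal_leI)
    also have "\<dots> = ennreal c * emeasure lborel (C w)"
      using sets_Pair1[OF E_N, of w] E_slice[OF that] by (simp add: nn_integral_cmult_indicator)
    finally show ?thesis .
  qed
  have "emeasure M {\<omega> \<in> space M. Y \<omega> \<in> C (W \<omega>)} = emeasure (distr M (N \<Otimes>\<^sub>M lborel) (\<lambda>\<omega>. (W \<omega>, Y \<omega>))) E"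
    using E_N measurable_space[OF W] by (subst emeasure_distr[OF WY]) (auto simp: E_def space_pair_measure intro!: arg_cong[where f = "emeasure M"])
  also have "\<dots> = emeasure (density (distr M N W \<Otimes>\<^sub>M lborel) p) E"
    by (simp add: distr_pair_eq_density[OF M W Y p dens])
  also have "\<dots> = (\<integral>\<^sup>+ z. ennreal (p z) * indicator E z \<partial>(distr M N W \<Otimes>\<^sub>M lborel))"
    using measurable_compose[OF p measurable_ennreal] E_PW
    by (intro emeasure_density) (simp_all add: measurable_cong_sets[OF sets_PW refl])
  also have "\<dots> = (\<integral>\<^sup>+ w. G w \<partial>distr M N W)"
    unfolding G_def by (rule lborel.nn_integral_fst[OF pE, symmetric])
  also have "\<dots> = (\<integral>\<^sup>+ \<omega>. G (W \<omega>) \<partial>M)"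
    using G W by (simp add: nn_integral_distr)
  also have "\<dots> \<le> (\<integral>\<^sup>+ \<omega>. ennreal c * emeasure lborel (C (W \<omega>)) \<partial>M)"
    using measurable_space[OF W] G_le by (intro nn_integral_mono) auto
  also have "\<dots> = ennreal c * (\<integral>\<^sup>+ \<omega>. emeasure lborel (C (W \<omega>)) \<partial>M)"
    using measurable_compose[OF W L] by (rule nn_integral_cmult)
  finally show ?thesis .
qed

lemma conf_exact_coverage_le:
  fixes M :: "'w measure"
    and X :: "nat \<Rightarrow> 'w \<Rightarrow> 'a::second_countable_topology"
    and Y :: "nat \<Rightarrow> 'w \<Rightarrow> real"
    and fit :: "(nat \<Rightarrow> 'a \<times> real) \<Rightarrow> 'a \<Rightarrow> real"
    and \<alpha> :: real
  assumes M: "prob_space M"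
    and X_meas: "\<And>i. i \<in> {1..Suc n} \<Longrightarrow> X i \<in> borel_measurable M"
    and Y_meas: "\<And>i. i \<in> {1..Suc n} \<Longrightarrow> Y i \<in> borel_measurable M"
    and Y_in: "\<And>\<omega>. \<omega> \<in> space M \<Longrightarrow> Y (Suc n) \<omega> \<in> Yset"
    and exch: "\<And>\<sigma>. \<sigma> permutes {1..Suc n} \<Longrightarrow>
       distr M (PiM {1..Suc n} (\<lambda>_. borel)) (\<lambda>\<omega>. \<lambda>i\<in>{1..Suc n}. (X (\<sigma> i) \<omega>, Y (\<sigma> i) \<omega>))
     = distr M (PiM {1..Suc n} (\<lambda>_. borel)) (\<lambda>\<omega>. \<lambda>i\<in>{1..Suc n}. (X i \<omega>, Y i \<omega>))"
    and fit_meas: "(\<lambda>(g, x). fit g x) \<in> borel_measurable (PiM {1..Suc n} (\<lambda>_. borel) \<Otimes>\<^sub>M borel)"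
    and fit_perm: "\<And>g \<sigma>. \<sigma> permutes {1..Suc n} \<Longrightarrow>
       fit (\<lambda>i\<in>{1..Suc n}. g (\<sigma> i)) = fit (\<lambda>i\<in>{1..Suc n}. g i)"
    and s_meas: "case_prod s \<in> borel_measurable borel"
    and distinct: "AE \<omega> in M. inj_on
       (score s fit (augment n (\<lambda>j\<in>{1..n}. (X j \<omega>, Y j \<omega>)) (X (Suc n) \<omega>) (Y (Suc n) \<omega>))) {1..Suc n}"
    and \<alpha>: "0 \<le> \<alpha>" "\<alpha> \<le> 1"
  shows "measure M {\<omega> \<in> space M. Y (Suc n) \<omega> \<in>
      conf_exact n s fit Yset \<alpha> (\<lambda>j\<in>{1..n}. (X j \<omega>, Y j \<omega>)) (X (Suc n) \<omega>)} \<le> 1 - \<alpha> + 1 / (real n + 1)"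
proof -
  define I where "I = {1..Suc n}"
  define Z where "Z \<omega> = (\<lambda>i\<in>I. (X i \<omega>, Y i \<omega>))" for \<omega>
  have augment_Z: "augment n (\<lambda>j\<in>{1..n}. (X j \<omega>, Y j \<omega>)) (X (Suc n) \<omega>) (Y (Suc n) \<omega>) = Z \<omega>" for \<omega>
    unfolding augment_def Z_def I_def by (auto simp: fun_eq_iff)
  have Z: "Z \<in> measurable M (PiM I (\<lambda>_. borel))"
    unfolding Z_def I_def using X_meas Y_meas by (intro measurable_restrict borel_measurable_Pair) auto
  have exch_Z: "distr M (PiM I (\<lambda>_. borel)) (\<lambda>\<omega>. \<lambda>i\<in>I. Z \<omega> (\<sigma> i)) = distr M (PiM I (\<lambda>_. borel)) Z"
    if \<sigma>: "\<sigma> permutes I" for \<sigma>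
  proof -
    have "(\<lambda>\<omega>. \<lambda>i\<in>I. Z \<omega> (\<sigma> i)) = (\<lambda>\<omega>. \<lambda>i\<in>I. (X (\<sigma> i) \<omega>, Y (\<sigma> i) \<omega>))"
      unfolding Z_def using permutes_in_image[OF \<sigma>] by (auto simp: fun_eq_iff)
    with exch[OF \<sigma>[unfolded I_def]] show ?thesis
      unfolding Z_def I_def by simp
  qed
  have score_meas: "(\<lambda>g. score s fit g i) \<in> borel_measurable (PiM I (\<lambda>_. borel))" if "i \<in> I" for i
    using fit_meas s_meas that unfolding I_def by (rule borel_measurable_score)
  have score_permute: "score s fit (\<lambda>k\<in>I. g (\<sigma> k)) i = score s fit g (\<sigma> i)"
    if "\<sigma> permutes I" "g \<in> extensional I" "i \<in> I" for \<sigma> g i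
    using fit_perm[of \<sigma> g] that unfolding I_def by (simp add: score_def extensional_restrict)
  have "Y (Suc n) \<omega> \<in> conf_exact n s fit Yset \<alpha> (\<lambda>j\<in>{1..n}. (X j \<omega>, Y j \<omega>)) (X (Suc n) \<omega>)
      \<longleftrightarrow> \<alpha> * card I < upper_rank (score s fit (Z \<omega>)) I (Suc n)" if "\<omega> \<in> space M" for \<omega>
    using Y_in[OF that] unfolding conf_exact_def mem_Collect_eq pval_exact_eq_upper_rank augment_Z
    by (simp add: I_def pos_less_divide_eq add_pos_pos algebra_simps)
  then have "{\<omega> \<in> space M. Y (Suc n) \<omega> \<in> conf_exact n s fit Yset \<alpha> (\<lambda>j\<in>{1..n}. (X j \<omega>, Y j \<omega>)) (X (Suc n) \<omega>)}
      = {\<omega> \<in> space M. \<alpha> * card I < upper_rank (score s fit (Z \<omega>)) I (Suc n)}"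
    by auto
  also have "measure M \<dots> \<le> 1 - \<alpha> + 1 / card I"
    using distinct unfolding augment_Z
    by (intro exchangeable_prob_upper_rank_greater_le[where T = "score s fit", OF M _ _ Z exch_Z score_meas
          score_permute _ \<alpha>]) (auto simp: I_def)
  finally show ?thesis
    unfolding I_def by (simp add: add.commute)
qed

lemma measurable_train_test_split:
  fixes X :: "nat \<Rightarrow> 'w \<Rightarrow> 'a::second_countable_topology" and Y :: "nat \<Rightarrow> 'w \<Rightarrow> real"
  assumes X_meas: "\<And>i. i \<in> {1..Suc n} \<Longrightarrow> X i \<in> borel_measurable M"
    and Y_meas: "\<And>i. i \<in> {1..Suc n} \<Longrightarrow> Y i \<in> borel_measurable M"
  shows "(\<lambda>\<omega>. ((\<lambda>j\<in>{1..n}. (X j \<omega>, Y j \<omega>)), X (Suc n) \<omega>)) \<in> measurable M (PiM {1..n} (\<lambda>_. borel) \<Otimes>\<^sub>M borel)"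
  using X_meas Y_meas by (intro measurable_Pair measurable_restrict borel_measurable_Pair) auto

lemma sets_conf_events:
  fixes X :: "nat \<Rightarrow> 'w \<Rightarrow> 'a::second_countable_topology" and Y :: "nat \<Rightarrow> 'w \<Rightarrow> real"
    and fit :: "(nat \<Rightarrow> 'a \<times> real) \<Rightarrow> 'a \<Rightarrow> real"
    and Stil tau :: "(nat \<Rightarrow> 'a \<times> real) \<Rightarrow> nat \<Rightarrow> real"
  assumes X_meas: "\<And>i. i \<in> {1..Suc n} \<Longrightarrow> X i \<in> borel_measurable M"
    and Y_meas: "\<And>i. i \<in> {1..Suc n} \<Longrightarrow> Y i \<in> borel_measurable M"
    and Yset: "Yset \<in> sets borel"
    and fit_meas: "(\<lambda>(g, x). fit g x) \<in> borel_measurable (PiM {1..Suc n} (\<lambda>_. borel) \<Otimes>\<^sub>M borel)"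
    and s_meas: "case_prod s \<in> borel_measurable borel"
    and Stil_meas: "\<And>i. (\<lambda>g. Stil g i) \<in> borel_measurable (PiM {1..Suc n} (\<lambda>_. borel))"
    and tau_meas: "\<And>i. (\<lambda>g. tau g i) \<in> borel_measurable (PiM {1..Suc n} (\<lambda>_. borel))"
  shows "{\<omega> \<in> space M. Y (Suc n) \<omega> \<in> conf_exact n s fit Yset \<alpha> (\<lambda>j\<in>{1..n}. (X j \<omega>, Y j \<omega>)) (X (Suc n) \<omega>)}
      \<in> sets M"
    and "{\<omega> \<in> space M. Y (Suc n) \<omega> \<in> conf_approx n Stil tau Yset \<alpha> (\<lambda>j\<in>{1..n}. (X j \<omega>, Y j \<omega>)) (X (Suc n) \<omega>)}
      \<in> sets M"
proof -
  have Z: "(\<lambda>\<omega>. (((\<lambda>j\<in>{1..n}. (X j \<omega>, Y j \<omega>)), X (Suc n) \<omega>), Y (Suc n) \<omega>))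
      \<in> measurable M ((PiM {1..n} (\<lambda>_. borel) \<Otimes>\<^sub>M borel) \<Otimes>\<^sub>M borel)"
    using measurable_train_test_split[where X = X and Y = Y and n = n, OF X_meas Y_meas] Y_meas by measurable
  from measurable_compose[OF Z pred_mem_conf_exact[OF Yset fit_meas s_meas]]
    measurable_compose[OF Z pred_mem_conf_approx[OF Yset Stil_meas tau_meas]]
  show "{\<omega> \<in> space M. Y (Suc n) \<omega> \<in> conf_exact n s fit Yset \<alpha> (\<lambda>j\<in>{1..n}. (X j \<omega>, Y j \<omega>)) (X (Suc n) \<omega>)}
      \<in> sets M"
    and "{\<omega> \<in> space M. Y (Suc n) \<omega> \<in> conf_approx n Stil tau Yset \<alpha> (\<lambda>j\<in>{1..n}. (X j \<omega>, Y j \<omega>)) (X (Suc n) \<omega>)}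
      \<in> sets M"
    by (simp_all add: pred_def)
qed

lemma conf_sym_diff_emeasure_le_THK:
  fixes X :: "nat \<Rightarrow> 'w \<Rightarrow> 'a::second_countable_topology" and Y :: "nat \<Rightarrow> 'w \<Rightarrow> real"
    and fit :: "(nat \<Rightarrow> 'a \<times> real) \<Rightarrow> 'a \<Rightarrow> real"
    and Stil tau :: "(nat \<Rightarrow> 'a \<times> real) \<Rightarrow> nat \<Rightarrow> real"
    and p :: "((nat \<Rightarrow> 'a \<times> real) \<times> 'a) \<times> real \<Rightarrow> real"
  assumes M: "finite_measure M"
    and X_meas: "\<And>i. i \<in> {1..Suc n} \<Longrightarrow> X i \<in> borel_measurable M"
    and Y_meas: "\<And>i. i \<in> {1..Suc n} \<Longrightarrow> Y i \<in> borel_measurable M"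
    and Yset: "Yset \<in> sets borel"
    and fit_meas: "(\<lambda>(g, x). fit g x) \<in> borel_measurable (PiM {1..Suc n} (\<lambda>_. borel) \<Otimes>\<^sub>M borel)"
    and s_meas: "case_prod s \<in> borel_measurable borel"
    and Stil_meas: "\<And>i. (\<lambda>g. Stil g i) \<in> borel_measurable (PiM {1..Suc n} (\<lambda>_. borel))"
    and tau_meas: "\<And>i. (\<lambda>g. tau g i) \<in> borel_measurable (PiM {1..Suc n} (\<lambda>_. borel))"
    and p_meas: "p \<in> borel_measurable ((PiM {1..n} (\<lambda>_. borel) \<Otimes>\<^sub>M borel) \<Otimes>\<^sub>M borel)"
    and p_bound: "\<And>w y. y \<in> Yset \<Longrightarrow> p (w, y) \<le> c"
    and p_density: "\<And>A B. A \<in> sets borel \<Longrightarrow> B \<in> sets (PiM {1..n} (\<lambda>_. borel) \<Otimes>\<^sub>M borel) \<Longrightarrow>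
       emeasure M {\<omega> \<in> space M. Y (Suc n) \<omega> \<in> A \<and>
                     ((\<lambda>j\<in>{1..n}. (X j \<omega>, Y j \<omega>)), X (Suc n) \<omega>) \<in> B}
       = (\<integral>\<^sup>+ w. indicator B w * (\<integral>\<^sup>+ y. indicator A y * ennreal (p (w, y)) \<partial>lborel)
            \<partial>(distr M (PiM {1..n} (\<lambda>_. borel) \<Otimes>\<^sub>M borel)
                  (\<lambda>\<omega>. ((\<lambda>j\<in>{1..n}. (X j \<omega>, Y j \<omega>)), X (Suc n) \<omega>))))"
  shows "emeasure M {\<omega> \<in> space M. Y (Suc n) \<omega> \<in>
      sym_diff (conf_approx n Stil tau Yset \<alpha> (\<lambda>j\<in>{1..n}. (X j \<omega>, Y j \<omega>)) (X (Suc n) \<omega>))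
               (conf_exact n s fit Yset \<alpha> (\<lambda>j\<in>{1..n}. (X j \<omega>, Y j \<omega>)) (X (Suc n) \<omega>))}
    \<le> ennreal c * (\<integral>\<^sup>+ \<omega>. THK n s fit Stil tau Yset \<alpha> (\<lambda>j\<in>{1..n}. (X j \<omega>, Y j \<omega>)) (X (Suc n) \<omega>) \<partial>M)"
proof -
  define W where "W \<omega> = ((\<lambda>j\<in>{1..n}. (X j \<omega>, Y j \<omega>)), X (Suc n) \<omega>)" for \<omega>
  define C where "C w = sym_diff (conf_approx n Stil tau Yset \<alpha> (fst w) (snd w))
    (conf_exact n s fit Yset \<alpha> (fst w) (snd w))" for w
  have C_sets: "{z \<in> space ((PiM {1..n} (\<lambda>_. borel) \<Otimes>\<^sub>M borel) \<Otimes>\<^sub>M borel). snd z \<in> C (fst z)}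
      \<in> sets ((PiM {1..n} (\<lambda>_. borel) \<Otimes>\<^sub>M borel) \<Otimes>\<^sub>M borel)"
    using pred_mem_conf_exact[OF Yset fit_meas s_meas] pred_mem_conf_approx[OF Yset Stil_meas tau_meas]
    unfolding C_def by measurable
  have W: "W \<in> measurable M (PiM {1..n} (\<lambda>_. borel) \<Otimes>\<^sub>M borel)"
    unfolding W_def using X_meas Y_meas by (rule measurable_train_test_split)
  have "emeasure M {\<omega> \<in> space M. Y (Suc n) \<omega> \<in> C (W \<omega>)}
      \<le> ennreal c * (\<integral>\<^sup>+ \<omega>. emeasure lborel (C (W \<omega>)) \<partial>M)"
    using Y_meas p_bound
    by (intro emeasure_mem_random_set_le[OF M W _ p_meas p_density[folded W_def] C_sets])
       (auto simp: C_def conf_exact_def conf_approx_def)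
  then show ?thesis
    by (simp add: C_def W_def THK_def)
qed

theorem lemma26:
  fixes M :: "'w measure"
    and X :: "nat \<Rightarrow> 'w \<Rightarrow> 'a::euclidean_space"
    and Y :: "nat \<Rightarrow> 'w \<Rightarrow> real"
    and n :: nat
    and Yset :: "real set"
    and fit :: "(nat \<Rightarrow> 'a \<times> real) \<Rightarrow> 'a \<Rightarrow> real"
    and s :: "real \<Rightarrow> real \<Rightarrow> real"
    and Stil tau :: "(nat \<Rightarrow> 'a \<times> real) \<Rightarrow> nat \<Rightarrow> real"
    and p :: "((nat \<Rightarrow> 'a \<times> real) \<times> 'a) \<times> real \<Rightarrow> real"
    and c \<alpha> :: real
  assumes M: "prob_space M"
    and X_meas: "\<And>i. i \<in> {1..Suc n} \<Longrightarrow> X i \<in> borel_measurable M"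
    and Y_meas: "\<And>i. i \<in> {1..Suc n} \<Longrightarrow> Y i \<in> borel_measurable M"
    and Yset: "Yset \<in> sets borel"
    and Y_in: "\<And>i \<omega>. i \<in> {1..Suc n} \<Longrightarrow> \<omega> \<in> space M \<Longrightarrow> Y i \<omega> \<in> Yset"
    and exch: "\<And>\<sigma>. \<sigma> permutes {1..Suc n} \<Longrightarrow>
       distr M (PiM {1..Suc n} (\<lambda>_. borel)) (\<lambda>\<omega>. \<lambda>i\<in>{1..Suc n}. (X (\<sigma> i) \<omega>, Y (\<sigma> i) \<omega>))
     = distr M (PiM {1..Suc n} (\<lambda>_. borel)) (\<lambda>\<omega>. \<lambda>i\<in>{1..Suc n}. (X i \<omega>, Y i \<omega>))"
    and fit_meas: "(\<lambda>(g, x). fit g x) \<in> borel_measurable (PiM {1..Suc n} (\<lambda>_. borel) \<Otimes>\<^sub>M borel)"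
    and fit_perm: "\<And>g \<sigma>. \<sigma> permutes {1..Suc n} \<Longrightarrow>
       fit (\<lambda>i\<in>{1..Suc n}. g (\<sigma> i)) = fit (\<lambda>i\<in>{1..Suc n}. g i)"
    and s_meas: "case_prod s \<in> borel_measurable borel"
    and Stil_meas: "\<And>i. (\<lambda>g. Stil g i) \<in> borel_measurable (PiM {1..Suc n} (\<lambda>_. borel))"
    and tau_meas: "\<And>i. (\<lambda>g. tau g i) \<in> borel_measurable (PiM {1..Suc n} (\<lambda>_. borel))"
    and approx: "\<And>\<omega> y i. \<omega> \<in> space M \<Longrightarrow> y \<in> Yset \<Longrightarrow> i \<in> {1..Suc n} \<Longrightarrow>
       (let g = augment n (\<lambda>j\<in>{1..n}. (X j \<omega>, Y j \<omega>)) (X (Suc n) \<omega>) y in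
          0 \<le> tau g i \<and> \<bar>score s fit g i - Stil g i\<bar> \<le> tau g i)"
    and distinct: "AE \<omega> in M. inj_on
       (score s fit (augment n (\<lambda>j\<in>{1..n}. (X j \<omega>, Y j \<omega>)) (X (Suc n) \<omega>) (Y (Suc n) \<omega>))) {1..Suc n}"
    and c_pos: "c > 0"
    and p_meas: "p \<in> borel_measurable ((PiM {1..n} (\<lambda>_. borel) \<Otimes>\<^sub>M borel) \<Otimes>\<^sub>M borel)"
    and p_nonneg: "\<And>w y. 0 \<le> p (w, y)"
    and p_bound: "\<And>w y. y \<in> Yset \<Longrightarrow> p (w, y) \<le> c"
    and p_density: "\<And>A B. A \<in> sets borel \<Longrightarrow> B \<in> sets (PiM {1..n} (\<lambda>_. borel) \<Otimes>\<^sub>M borel) \<Longrightarrow>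
       emeasure M {\<omega> \<in> space M. Y (Suc n) \<omega> \<in> A \<and>
                     ((\<lambda>j\<in>{1..n}. (X j \<omega>, Y j \<omega>)), X (Suc n) \<omega>) \<in> B}
       = (\<integral>\<^sup>+ w. indicator B w * (\<integral>\<^sup>+ y. indicator A y * ennreal (p (w, y)) \<partial>lborel)
            \<partial>(distr M (PiM {1..n} (\<lambda>_. borel) \<Otimes>\<^sub>M borel)
                  (\<lambda>\<omega>. ((\<lambda>j\<in>{1..n}. (X j \<omega>, Y j \<omega>)), X (Suc n) \<omega>))))"
    and \<alpha>: "0 < \<alpha>" "\<alpha> < 1"
  shows "ennreal (measure M {\<omega> \<in> space M. Y (Suc n) \<omega> \<in>
            conf_approx n Stil tau Yset \<alpha> (\<lambda>j\<in>{1..n}. (X j \<omega>, Y j \<omega>)) (X (Suc n) \<omega>)})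
    \<le> ennreal (1 - \<alpha> + 1 / (real n + 1))
       + ennreal c * (\<integral>\<^sup>+ \<omega>. THK n s fit Stil tau Yset \<alpha> (\<lambda>j\<in>{1..n}. (X j \<omega>, Y j \<omega>)) (X (Suc n) \<omega>) \<partial>M)"
proof -
  interpret prob_space M by (rule M)
  define D where "D \<omega> = (\<lambda>j\<in>{1..n}. (X j \<omega>, Y j \<omega>))" for \<omega>
  define Exact where "Exact = {\<omega> \<in> space M. Y (Suc n) \<omega> \<in> conf_exact n s fit Yset \<alpha> (D \<omega>) (X (Suc n) \<omega>)}"
  define Approx where "Approx = {\<omega> \<in> space M. Y (Suc n) \<omega> \<in> conf_approx n Stil tau Yset \<alpha> (D \<omega>) (X (Suc n) \<omega>)}"
  have events: "Exact \<in> events" "Approx \<in> events"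
    unfolding Exact_def Approx_def D_def
    using sets_conf_events[OF X_meas Y_meas Yset fit_meas s_meas Stil_meas tau_meas] by auto
  have "emeasure M Approx \<le> emeasure M Exact + emeasure M (sym_diff Approx Exact)"
    using events by (intro order.trans[OF emeasure_mono emeasure_subadditive]) auto
  also have "emeasure M Exact \<le> ennreal (1 - \<alpha> + 1 / (real n + 1))"
    unfolding emeasure_eq_measure Exact_def D_def using \<alpha> Y_in
    by (intro ennreal_leI conf_exact_coverage_le[OF M X_meas Y_meas _ exch fit_meas fit_perm s_meas distinct]) auto
  also have "sym_diff Approx Exact = {\<omega> \<in> space M. Y (Suc n) \<omega> \<in>
      sym_diff (conf_approx n Stil tau Yset \<alpha> (D \<omega>) (X (Suc n) \<omega>)) (conf_exact n s fit Yset \<alpha> (D \<omega>) (X (Suc n) \<omega>))}"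
    unfolding Approx_def Exact_def by auto
  also have "emeasure M \<dots> \<le> ennreal c * (\<integral>\<^sup>+ \<omega>. THK n s fit Stil tau Yset \<alpha> (D \<omega>) (X (Suc n) \<omega>) \<partial>M)"
    unfolding D_def
    by (rule conf_sym_diff_emeasure_le_THK[where X = X and Y = Y and n = n, OF finite_measure_axioms X_meas Y_meas Yset
          fit_meas s_meas Stil_meas tau_meas p_meas p_bound p_density])
  finally show ?thesis
    unfolding Approx_def D_def emeasure_eq_measure by (simp add: add_mono)
qed

end
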